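(* Let $G=(N,E)$ and $G'=(N,E')$ be DAGs with $\mathcal{P}^{G'}\supseteq\mathcal{P}^G$, $G'\supseteq G^*$, and $|\mathrm{roots}(G)|=1$, and let $\mathcal{O}'$ be a topological ordering of $G'$. Let $r,u,v\in N$ with $\mathcal{O}'(v)<\mathcal{O}'(u)<\mathcal{O}'(r)$ and $(r,v)\in E$. Then $(v,u)\in E'$.
   Context: DAG: finite directed graph without directed cycles; $\mathrm{pa}_G(s)$ = parents of $s$; $\mathrm{roots}(G)=\{s:\mathrm{pa}_G(s)=\emptyset\}$. $G^*=(N,E^* )$ with $E^*=\{(t,s):(s,t)\in E\}$; $G'\supseteq G^*$ means $E'\supseteq E^*$. A topological ordering of $G'$ is a bijection $\mathcal{O}':N\to\{1,\dots,|N|\}$ with $(s,t)\in E'\Rightarrow\mathcal{O}'(s)<\mathcal{O}'(t)$. Each node $s$ has a state space $\mathsf{X}_s$ (finite set with counting measure, or finite-dimensional real vector space with Lebesgue measure $\mu_s$), $\mu=\otimes_s\mu_s$; $\mathcal{P}^G$ is the set of probability distributions on $\times_s\mathsf{X}_s$ with $\mu$-density $p(x)=\prod_{s}k^s(x_s\mid x_{\mathrm{pa}_G(s)})$ for some nonnegative measurable $k^s$ with $\int k^s(x_s\mid x_{\mathrm{pa}_G(s)})\,d\mu_s(x_s)=1$. *)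

theory Defs
  imports "HOL-Probability.Probability"
begin

definition is_DAG :: "'n set \<Rightarrow> ('n \<times> 'n) set \<Rightarrow> bool" where
  "is_DAG N E \<longleftrightarrow> finite N \<and> E \<subseteq> N \<times> N \<and> acyclic E"

definition pa :: "('n \<times> 'n) set \<Rightarrow> 'n \<Rightarrow> 'n set" where
  "pa E s = {t. (t, s) \<in> E}"

definition roots :: "'n set \<Rightarrow> ('n \<times> 'n) set \<Rightarrow> 'n set" where
  "roots N E = {s \<in> N. pa E s = {}}"

definition topo_order :: "'n set \<Rightarrow> ('n \<times> 'n) set \<Rightarrow> ('n \<Rightarrow> nat) \<Rightarrow> bool" where
  "topo_order N E ord \<longleftrightarrow> bij_betw ord N {1..card N} \<and> (\<forall>(s,t)\<in>E. ord s < ord t)"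

text \<open>State spaces: each node carries either a finite set (at least two points) with
  counting measure, or R^d (d >= 1) with Lebesgue measure, realised as the product of
  d copies of lborel on extensional functions nat => real.\<close>
definition valid_state_spaces :: "'n set \<Rightarrow> ('n \<Rightarrow> (nat \<Rightarrow> real) measure) \<Rightarrow> bool" where
  "valid_state_spaces N M \<longleftrightarrow>
     (\<forall>s\<in>N. (\<exists>A. finite A \<and> card A \<ge> 2 \<and> M s = count_space A)
           \<or> (\<exists>d\<ge>1. M s = (\<Pi>\<^sub>M i\<in>{..<d}. lborel)))"

definition Pfam :: "'n set \<Rightarrow> ('n \<times> 'n) set \<Rightarrow> ('n \<Rightarrow> 'a measure) \<Rightarrow> ('n \<Rightarrow> 'a) measure set" where
  "Pfam N E M = {P. prob_space P \<and>
     (\<exists>k :: 'n \<Rightarrow> 'a \<Rightarrow> ('n \<Rightarrow> 'a) \<Rightarrow> real.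
        (\<forall>s\<in>N. (\<lambda>(y, z). k s y z) \<in> borel_measurable (M s \<Otimes>\<^sub>M (\<Pi>\<^sub>M t\<in>pa E s. M t))
              \<and> (\<forall>y z. 0 \<le> k s y z)
              \<and> (\<forall>z\<in>space (\<Pi>\<^sub>M t\<in>pa E s. M t). (\<integral>\<^sup>+ y. ennreal (k s y z) \<partial>M s) = 1))
        \<and> P = density (\<Pi>\<^sub>M s\<in>N. M s)
                 (\<lambda>x. ennreal (\<Prod>s\<in>N. k s (x s) (restrict x (pa E s)))))}"

end

theory Submission
  imports Defs
begin

text \<open>
  Suppose \<open>(v, u) \<notin> E'\<close>. Pick in every state space two disjoint sets of measure one and let \<open>T\<close>
  consist of the \<open>G\<close>-ancestors of \<open>u\<close> and of \<open>r\<close>, together with \<open>v\<close>. Every node of \<open>T\<close> other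
  than the unique root has a parent in \<open>T\<close> (for \<open>v\<close> this is \<open>r\<close>), so the following law lies in
  \<open>P\<^sup>G\<close>: the root tosses a fair coin, every node of \<open>T\<close> copies the coin of such a parent, and the
  other nodes ignore it. It is the even mixture of two product laws, and \<open>u\<close> and \<open>v\<close> always show
  the same coin.

  As \<open>E\<inverse> \<subseteq> E'\<close>, proper \<open>G\<close>-ancestors of \<open>u\<close> and \<open>r\<close> come after \<open>u\<close> in \<open>O'\<close>; so on the initial
  segment \<open>A = {s. O' s \<le> O' u}\<close> of the ordering only \<open>u\<close> and \<open>v\<close> carry the coin. A \<open>G'\<close>-factorisation
  of the law marginalises to \<open>A\<close>, where \<open>u\<close> is the last node and \<open>v\<close> is not a parent of \<open>u\<close>.
  Hence, given the remaining coordinates of \<open>A\<close>, the joint law of \<open>u\<close> and \<open>v\<close> is a product: the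
  \<open>2 \<times> 2\<close> table of their coin outcomes has rank one, whereas it is \<open>diag(1/2, 1/2)\<close>.
\<close>

section \<open>Marginals and sections of densities on finite products\<close>

lemma borel_measurable_kernel_PiM:
  assumes "(\<lambda>(y, z). K y z) \<in> borel_measurable (M t \<Otimes>\<^sub>M PiM P M)" "t \<in> S" "P \<subseteq> S"
  shows "(\<lambda>x. K (x t) (restrict x P)) \<in> borel_measurable (PiM S M)"
proof -
  have "(\<lambda>x. (x t, restrict x P)) \<in> measurable (PiM S M) (M t \<Otimes>\<^sub>M PiM P M)"
    using assms(2,3) by (intro measurable_Pair measurable_component_singleton measurable_restrict_subset)
  from measurable_compose[OF this assms(1)] show ?thesis by simp
qed

lemma AE_ex_in_set:
  assumes "AE x in M. P x" "B \<in> sets M" "emeasure M B \<noteq> 0"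
  shows "\<exists>x\<in>B. P x"
proof (rule ccontr)
  assume "\<not> (\<exists>x\<in>B. P x)"
  with assms(1) have "AE x in M. x \<notin> B"
    by (auto elim: AE_mp)
  then show False
    using assms(2,3) AE_iff_measurable[of B M "\<lambda>x. x \<notin> B"] sets.sets_into_space by blast
qed

lemma initial_segment_split:
  fixes ord :: "'i \<Rightarrow> nat"
  assumes N: "finite N" "u \<in> N" "v \<in> N" "ord v < ord u"
    and Pa: "\<And>s. s \<in> N \<Longrightarrow> Pa s \<subseteq> N" "\<And>s t. s \<in> N \<Longrightarrow> t \<in> Pa s \<Longrightarrow> ord t < ord s"
    and v_Pa: "v \<notin> Pa u"
  defines "W \<equiv> {s \<in> N. ord s \<le> ord u} - {u, v}"
  shows "{s \<in> N. ord s \<le> ord u} = insert u (insert v W)"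
    and "finite W" "u \<notin> insert v W" "v \<notin> W" "W \<subseteq> N"
    and "\<And>s. s \<in> insert u (insert v W) \<Longrightarrow> Pa s \<subseteq> insert v W"
    and "Pa u \<subseteq> W"
proof -
  show "{s \<in> N. ord s \<le> ord u} = insert u (insert v W)" "finite W" "u \<notin> insert v W" "v \<notin> W" "W \<subseteq> N"
    using N unfolding W_def by auto
  show Pa_W: "Pa s \<subseteq> insert v W" if "s \<in> insert u (insert v W)" for s
    using that Pa N(2-4) unfolding W_def by fastforce
  show "Pa u \<subseteq> W"
    using Pa_W[of u] v_Pa by auto
qed

lemma prod_kernels_two_point_update:
  assumes W: "finite W" "u \<notin> insert v W" "v \<notin> W"
    and Pa: "\<And>s. s \<in> insert u (insert v W) \<Longrightarrow> Pa s \<subseteq> insert v W" "Pa u \<subseteq> W"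
  shows "(\<Prod>s\<in>insert u (insert v W). k s ((x(v := z, u := y)) s) (restrict (x(v := z, u := y)) (Pa s)))
    = k u y (restrict x (Pa u)) * (\<Prod>s\<in>insert v W. k s ((x(v := z)) s) (restrict (x(v := z)) (Pa s)))"
proof -
  have restr: "restrict (x(v := z, u := y)) (Pa s) = restrict (x(v := z)) (Pa s)" if "s \<in> insert u (insert v W)" for s
    using Pa(1)[OF that] W(2) by (intro restrict_fupd) auto
  have "(\<Prod>s\<in>insert v W. k s ((x(v := z, u := y)) s) (restrict (x(v := z, u := y)) (Pa s)))
    = (\<Prod>s\<in>insert v W. k s ((x(v := z)) s) (restrict (x(v := z)) (Pa s)))"
    using W(2) restr by (intro prod.cong) auto
  moreover have "restrict (x(v := z)) (Pa u) = restrict x (Pa u)"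
    using Pa(2) W(3) by (intro restrict_fupd) auto
  ultimately show ?thesis
    using W restr[of u] by simp
qed

context product_sigma_finite
begin

lemma PiE_unit_box:
  assumes "finite W" "\<And>s. s \<in> W \<Longrightarrow> B s \<in> sets (M s)" "\<And>s. s \<in> W \<Longrightarrow> emeasure (M s) (B s) = 1"
  shows "PiE W B \<in> sets (PiM W M)" "emeasure (PiM W M) (PiE W B) = 1" "PiE W B \<subseteq> space (PiM W M)"
proof -
  show "PiE W B \<in> sets (PiM W M)"
    using assms(1,2) by (rule sets_PiM_I_finite)
  then show "PiE W B \<subseteq> space (PiM W M)"
    by (rule sets.sets_into_space)
  show "emeasure (PiM W M) (PiE W B) = 1"
    using assms by (subst emeasure_PiM) (auto intro!: prod.neutral)
qed

lemma nn_integral_PiM_integrate_out_leaf: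
  fixes K :: "'i \<Rightarrow> 'a \<Rightarrow> ('i \<Rightarrow> 'a) \<Rightarrow> ennreal"
  assumes S: "finite S" "s \<notin> S" "A \<subseteq> S"
    and Pa: "\<And>t. t \<in> insert s S \<Longrightarrow> Pa t \<subseteq> S"
    and K_meas: "\<And>t. t \<in> insert s S \<Longrightarrow> (\<lambda>(y, z). K t y z) \<in> borel_measurable (M t \<Otimes>\<^sub>M PiM (Pa t) M)"
    and K_norm: "\<And>z. z \<in> space (PiM (Pa s) M) \<Longrightarrow> (\<integral>\<^sup>+ y. K s y z \<partial>M s) = 1"
    and \<phi>: "\<phi> \<in> borel_measurable (PiM A M)"
  shows "(\<integral>\<^sup>+ x. \<phi> (restrict x A) * (\<Prod>t\<in>insert s S. K t (x t) (restrict x (Pa t))) \<partial>PiM (insert s S) M)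
       = (\<integral>\<^sup>+ x. \<phi> (restrict x A) * (\<Prod>t\<in>S. K t (x t) (restrict x (Pa t))) \<partial>PiM S M)"
proof -
  have meas: "(\<lambda>x. \<phi> (restrict x A) * (\<Prod>t\<in>insert s S. K t (x t) (restrict x (Pa t))))
      \<in> borel_measurable (PiM (insert s S) M)"
  proof (intro borel_measurable_times_ennreal borel_measurable_prod_ennreal)
    show "(\<lambda>x. \<phi> (restrict x A)) \<in> borel_measurable (PiM (insert s S) M)"
      using measurable_compose[OF measurable_restrict_subset[of A "insert s S"] \<phi>] S(3) by auto
  qed (use Pa K_meas in \<open>auto intro: borel_measurable_kernel_PiM\<close>)
  let ?F = "\<lambda>x. \<phi> (restrict x A) * (\<Prod>t\<in>S. K t (x t) (restrict x (Pa t)))"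
  have "(\<integral>\<^sup>+ x. \<phi> (restrict x A) * (\<Prod>t\<in>insert s S. K t (x t) (restrict x (Pa t))) \<partial>PiM (insert s S) M)
     = (\<integral>\<^sup>+ x. (\<integral>\<^sup>+ y. ?F x * K s y (restrict x (Pa s)) \<partial>M s) \<partial>PiM S M)"
    unfolding product_nn_integral_insert[OF S(1,2) meas]
  proof (intro nn_integral_cong)
    fix x :: "'i \<Rightarrow> 'a" and y :: 'a
    have restr: "restrict (x(s := y)) (Pa t) = restrict x (Pa t)" if "t \<in> insert s S" for t
      using Pa[OF that] S(2) by (intro restrict_fupd) auto
    then have "(\<Prod>t\<in>S. K t ((x(s := y)) t) (restrict (x(s := y)) (Pa t))) = (\<Prod>t\<in>S. K t (x t) (restrict x (Pa t)))"
      using S(2) by (intro prod.cong) auto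
    moreover have "restrict (x(s := y)) A = restrict x A"
      using S(2,3) by (intro restrict_fupd) auto
    ultimately show "\<phi> (restrict (x(s := y)) A) * (\<Prod>t\<in>insert s S. K t ((x(s := y)) t) (restrict (x(s := y)) (Pa t)))
      = ?F x * K s y (restrict x (Pa s))"
      using S restr[of s] by (simp add: mult_ac)
  qed
  also have "\<dots> = (\<integral>\<^sup>+ x. ?F x \<partial>PiM S M)"
  proof (rule nn_integral_cong)
    fix x assume "x \<in> space (PiM S M)"
    then have z: "restrict x (Pa s) \<in> space (PiM (Pa s) M)"
      using Pa[of s] by (auto simp: space_PiM PiE_iff)
    have "(\<lambda>y. K s y (restrict x (Pa s))) \<in> borel_measurable (M s)"
      using measurable_Pair_compose_split[OF K_meas[of s] measurable_ident measurable_const[OF z]] by simp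
    then show "(\<integral>\<^sup>+ y. ?F x * K s y (restrict x (Pa s)) \<partial>M s) = ?F x"
      using K_norm[OF z] by (simp add: nn_integral_cmult)
  qed
  finally show ?thesis .
qed

lemma nn_integral_PiM_factorized_marginal:
  fixes K :: "'i \<Rightarrow> 'a \<Rightarrow> ('i \<Rightarrow> 'a) \<Rightarrow> ennreal" and ord :: "'i \<Rightarrow> nat"
  assumes S: "finite S" "A \<subseteq> S"
    and Pa: "\<And>s. s \<in> S \<Longrightarrow> Pa s \<subseteq> S" "\<And>s t. s \<in> S \<Longrightarrow> t \<in> Pa s \<Longrightarrow> ord t < ord s"
    and ancestral: "\<And>s. s \<in> A \<Longrightarrow> Pa s \<subseteq> A"
    and K_meas: "\<And>s. s \<in> S \<Longrightarrow> (\<lambda>(y, z). K s y z) \<in> borel_measurable (M s \<Otimes>\<^sub>M PiM (Pa s) M)"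
    and K_norm: "\<And>s z. s \<in> S \<Longrightarrow> z \<in> space (PiM (Pa s) M) \<Longrightarrow> (\<integral>\<^sup>+ y. K s y z \<partial>M s) = 1"
    and \<phi>: "\<phi> \<in> borel_measurable (PiM A M)"
  shows "(\<integral>\<^sup>+ x. \<phi> (restrict x A) * (\<Prod>s\<in>S. K s (x s) (restrict x (Pa s))) \<partial>PiM S M)
       = (\<integral>\<^sup>+ x. \<phi> x * (\<Prod>s\<in>A. K s (x s) (restrict x (Pa s))) \<partial>PiM A M)"
proof -
  let ?I = "\<lambda>D. (\<integral>\<^sup>+ x. \<phi> (restrict x A) * (\<Prod>s\<in>A \<union> D. K s (x s) (restrict x (Pa s))) \<partial>PiM (A \<union> D) M)"
  have "?I D = ?I {}" if "finite D" "D \<subseteq> S - A" "\<And>s. s \<in> A \<union> D \<Longrightarrow> Pa s \<subseteq> A \<union> D" for D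
    using that
  proof (induction D rule: finite_ranking_induct[where f = ord])
    case (insert s D)
    show ?case
    proof (cases "s \<in> D")
      case False
      \<comment> \<open>\<open>s\<close> has maximal rank in \<open>D\<close>, hence is a parent of no node of \<open>A \<union> D\<close>\<close>
      have closed: "Pa t \<subseteq> A \<union> D" if "t \<in> insert s (A \<union> D)" for t
      proof -
        have "s \<notin> Pa t"
          using that ancestral[of t] insert.hyps(2)[of t] insert.prems(1) Pa(2)[of t s] by fastforce
        then show ?thesis using that insert.prems(2)[of t] by auto
      qed
      moreover have "finite (A \<union> D)" "s \<notin> A \<union> D" "A \<union> D \<subseteq> S" "insert s (A \<union> D) \<subseteq> S"
        using False insert S by (auto intro: finite_subset)
      ultimately have "?I (insert s D) = ?I D"
        unfolding Un_insert_right using K_meas K_norm \<phi>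
        by (intro nn_integral_PiM_integrate_out_leaf) auto
      also have "\<dots> = ?I {}"
        by (rule insert.IH) (use insert.prems(1) closed in auto)
      finally show ?thesis .
    qed (use insert in \<open>simp add: insert_absorb\<close>)
  qed simp
  from this[of "S - A"] S Pa(1) show ?thesis
    by (auto simp: Un_absorb1 space_PiM intro!: nn_integral_cong)
qed

lemma borel_measurable_nn_integral_fun_upd:
  assumes "F \<in> borel_measurable (PiM (insert i I) M)"
  shows "(\<lambda>x. \<integral>\<^sup>+ y. F (x(i := y)) \<partial>M i) \<in> borel_measurable (PiM I M)"
proof -
  have "(\<lambda>(x, y). F (x(i := y))) \<in> borel_measurable (PiM I M \<Otimes>\<^sub>M M i)"
    using measurable_compose[OF measurable_add_dim assms] by (simp add: split_def)
  then show ?thesis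
    by (rule M.borel_measurable_nn_integral[of "\<lambda>x y. F (x(i := y))", simplified])
qed

lemma nn_integral_PiM_insert2:
  assumes W: "finite W" "u \<notin> insert v W" "v \<notin> W"
    and F: "F \<in> borel_measurable (PiM (insert u (insert v W)) M)"
  shows "integral\<^sup>N (PiM (insert u (insert v W)) M) F
    = (\<integral>\<^sup>+ x. (\<integral>\<^sup>+ z. (\<integral>\<^sup>+ y. F (x(v := z, u := y)) \<partial>M u) \<partial>M v) \<partial>PiM W M)"
  using W F
  by (simp add: product_nn_integral_insert borel_measurable_nn_integral_fun_upd)

lemma nn_integral_two_point_sections:
  assumes W: "finite W" "u \<notin> insert v W" "v \<notin> W"
    and S: "S \<in> sets (PiM W M)" and F: "F \<in> borel_measurable (PiM (insert u (insert v W)) M)"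
  shows "(\<integral>\<^sup>+ x \<in> S. (\<integral>\<^sup>+ z. (\<integral>\<^sup>+ y. F (x(v := z, u := y)) \<partial>M u) \<partial>M v) \<partial>PiM W M)
    = (\<integral>\<^sup>+ x. indicator S (restrict x W) * F x \<partial>PiM (insert u (insert v W)) M)"
proof -
  have "(\<lambda>x. indicator S (restrict x W) * F x) \<in> borel_measurable (PiM (insert u (insert v W)) M)"
    using S F measurable_restrict_subset[of W "insert u (insert v W)" M] by measurable
  then have "(\<integral>\<^sup>+ x. indicator S (restrict x W) * F x \<partial>PiM (insert u (insert v W)) M)
    = (\<integral>\<^sup>+ x. (\<integral>\<^sup>+ z. (\<integral>\<^sup>+ y. indicator S (restrict (x(v := z, u := y)) W) * F (x(v := z, u := y))
        \<partial>M u) \<partial>M v) \<partial>PiM W M)"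
    by (rule nn_integral_PiM_insert2[OF W])
  also have "\<dots> = (\<integral>\<^sup>+ x \<in> S. (\<integral>\<^sup>+ z. (\<integral>\<^sup>+ y. F (x(v := z, u := y)) \<partial>M u) \<partial>M v) \<partial>PiM W M)"
  proof (rule nn_integral_cong)
    fix x assume "x \<in> space (PiM W M)"
    then have "restrict (x(v := z, u := y)) W = x" for z y
      using W by (auto simp: space_PiM)
    then show "(\<integral>\<^sup>+ z. (\<integral>\<^sup>+ y. indicator S (restrict (x(v := z, u := y)) W) * F (x(v := z, u := y)) \<partial>M u) \<partial>M v)
      = (\<integral>\<^sup>+ z. (\<integral>\<^sup>+ y. F (x(v := z, u := y)) \<partial>M u) \<partial>M v) * indicator S x"
      by (cases "x \<in> S") simp_all
  qed
  finally show ?thesis ..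
qed

lemma AE_two_point_sections_eq:
  fixes g f :: "('i \<Rightarrow> 'a) \<Rightarrow> ennreal"
  assumes W: "finite W" "u \<notin> insert v W" "v \<notin> W"
    and meas: "g \<in> borel_measurable (PiM (insert u (insert v W)) M)"
      "f \<in> borel_measurable (PiM (insert u (insert v W)) M)"
    and eq: "\<And>\<phi>. \<phi> \<in> borel_measurable (PiM (insert u (insert v W)) M) \<Longrightarrow>
      (\<integral>\<^sup>+ x. \<phi> x * g x \<partial>PiM (insert u (insert v W)) M) = (\<integral>\<^sup>+ x. \<phi> x * f x \<partial>PiM (insert u (insert v W)) M)"
    and YZ: "Y \<in> sets (M u)" "Z \<in> sets (M v)"
  shows "AE x in PiM W M.
    (\<integral>\<^sup>+ z. (\<integral>\<^sup>+ y. indicator Y y * indicator Z z * g (x(v := z, u := y)) \<partial>M u) \<partial>M v)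
  = (\<integral>\<^sup>+ z. (\<integral>\<^sup>+ y. indicator Y y * indicator Z z * f (x(v := z, u := y)) \<partial>M u) \<partial>M v)"
proof -
  let ?A = "insert u (insert v W)"
  let ?test = "\<lambda>g w. indicator Y (w u) * indicator Z (w v) * g w :: ennreal"
  let ?sec = "\<lambda>F x. \<integral>\<^sup>+ z. (\<integral>\<^sup>+ y. F (x(v := z, u := y)) \<partial>M u) \<partial>M v"
  have test_meas: "?test g \<in> borel_measurable (PiM ?A M)" "?test f \<in> borel_measurable (PiM ?A M)"
    using meas YZ by measurable
  interpret PW: sigma_finite_measure "PiM W M"
    using W(1) by (rule sigma_finite)
  have "AE x in PiM W M. ?sec (?test g) x = ?sec (?test f) x"
  proof (rule PW.density_unique2)
    fix S assume S: "S \<in> sets (PiM W M)"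
    have "(\<lambda>x. indicator S (restrict x W) :: ennreal) \<in> borel_measurable (PiM ?A M)"
      using S measurable_restrict_subset[of W ?A M] by measurable
    moreover have "(\<lambda>x. indicator Y (x u) * indicator Z (x v) :: ennreal) \<in> borel_measurable (PiM ?A M)"
      using YZ by measurable
    ultimately have "(\<lambda>x. indicator S (restrict x W) * (indicator Y (x u) * indicator Z (x v)) :: ennreal)
      \<in> borel_measurable (PiM ?A M)"
      by (rule borel_measurable_times_ennreal)
    from eq[OF this] show "(\<integral>\<^sup>+ x \<in> S. ?sec (?test g) x \<partial>PiM W M) = (\<integral>\<^sup>+ x \<in> S. ?sec (?test f) x \<partial>PiM W M)"
      using nn_integral_two_point_sections[OF W S test_meas(1)] nn_integral_two_point_sections[OF W S test_meas(2)]
      by (simp add: mult.assoc)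
  qed (use test_meas in \<open>(intro borel_measurable_nn_integral_fun_upd, simp)+\<close>)
  moreover have "v \<noteq> u"
    using W(2) by auto
  ultimately show ?thesis
    by simp
qed

lemma ex_two_point_sections_eq:
  fixes g f :: "('i \<Rightarrow> 'a) \<Rightarrow> ennreal" and Y :: "'c::countable \<Rightarrow> 'a set" and Z :: "'d::countable \<Rightarrow> 'a set"
  assumes W: "finite W" "u \<notin> insert v W" "v \<notin> W"
    and meas: "g \<in> borel_measurable (PiM (insert u (insert v W)) M)"
      "f \<in> borel_measurable (PiM (insert u (insert v W)) M)"
    and eq: "\<And>\<phi>. \<phi> \<in> borel_measurable (PiM (insert u (insert v W)) M) \<Longrightarrow>
      (\<integral>\<^sup>+ x. \<phi> x * g x \<partial>PiM (insert u (insert v W)) M) = (\<integral>\<^sup>+ x. \<phi> x * f x \<partial>PiM (insert u (insert v W)) M)"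
    and YZ: "\<And>i. Y i \<in> sets (M u)" "\<And>j. Z j \<in> sets (M v)"
    and B: "B \<in> sets (PiM W M)" "emeasure (PiM W M) B \<noteq> 0"
  shows "\<exists>x\<in>B. \<forall>i j.
    (\<integral>\<^sup>+ z. (\<integral>\<^sup>+ y. indicator (Y i) y * indicator (Z j) z * g (x(v := z, u := y)) \<partial>M u) \<partial>M v)
  = (\<integral>\<^sup>+ z. (\<integral>\<^sup>+ y. indicator (Y i) y * indicator (Z j) z * f (x(v := z, u := y)) \<partial>M u) \<partial>M v)"
proof (rule AE_ex_in_set[OF _ B])
  show "AE x in PiM W M. \<forall>i j.
    (\<integral>\<^sup>+ z. (\<integral>\<^sup>+ y. indicator (Y i) y * indicator (Z j) z * g (x(v := z, u := y)) \<partial>M u) \<partial>M v)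
  = (\<integral>\<^sup>+ z. (\<integral>\<^sup>+ y. indicator (Y i) y * indicator (Z j) z * f (x(v := z, u := y)) \<partial>M u) \<partial>M v)"
    using AE_two_point_sections_eq[OF W meas eq YZ] by (simp add: AE_all_countable)
qed

lemma nn_integral_factorized_two_point_section:
  fixes k :: "'i \<Rightarrow> 'a \<Rightarrow> ('i \<Rightarrow> 'a) \<Rightarrow> ennreal"
  assumes W: "finite W" "u \<notin> insert v W" "v \<notin> W"
    and Pa: "\<And>s. s \<in> insert u (insert v W) \<Longrightarrow> Pa s \<subseteq> insert v W" "Pa u \<subseteq> W"
    and k_meas: "\<And>s. s \<in> insert u (insert v W) \<Longrightarrow> (\<lambda>(y, z). k s y z) \<in> borel_measurable (M s \<Otimes>\<^sub>M PiM (Pa s) M)"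
    and YZ: "Y \<in> sets (M u)" "Z \<in> sets (M v)" and x: "x \<in> space (PiM W M)"
  shows "(\<integral>\<^sup>+ z. (\<integral>\<^sup>+ y. indicator Y y * indicator Z z
        * (\<Prod>s\<in>insert u (insert v W). k s ((x(v := z, u := y)) s) (restrict (x(v := z, u := y)) (Pa s))) \<partial>M u) \<partial>M v)
    = (\<integral>\<^sup>+ y. indicator Y y * k u y (restrict x (Pa u)) \<partial>M u)
      * (\<integral>\<^sup>+ z. indicator Z z * (\<Prod>s\<in>insert v W. k s ((x(v := z)) s) (restrict (x(v := z)) (Pa s))) \<partial>M v)"
proof -
  define R where "R w = (\<Prod>s\<in>insert v W. k s (w s) (restrict w (Pa s)))" for w
  have z: "restrict x (Pa u) \<in> space (PiM (Pa u) M)"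
    using x Pa(2) by (auto simp: space_PiM PiE_iff)
  have "(\<lambda>y. k u y (restrict x (Pa u))) \<in> borel_measurable (M u)"
    using measurable_Pair_compose_split[OF k_meas[of u] measurable_ident measurable_const[OF z]] by simp
  then have a_meas: "(\<lambda>y. indicator Y y * k u y (restrict x (Pa u))) \<in> borel_measurable (M u)"
    using YZ by measurable
  have "R \<in> borel_measurable (PiM (insert v W) M)"
    unfolding R_def using Pa(1) k_meas by (intro borel_measurable_prod_ennreal borel_measurable_kernel_PiM) auto
  then have "(\<lambda>z. R (x(v := z))) \<in> borel_measurable (M v)"
    by (rule measurable_compose[OF measurable_component_update[OF x W(3)]])
  then have c_meas: "(\<lambda>z. indicator Z z * R (x(v := z))) \<in> borel_measurable (M v)"
    using YZ by measurable
  have "indicator Y y * indicator Z z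
        * (\<Prod>s\<in>insert u (insert v W). k s ((x(v := z, u := y)) s) (restrict (x(v := z, u := y)) (Pa s)))
      = (indicator Z z * R (x(v := z))) * (indicator Y y * k u y (restrict x (Pa u)))" for y z
  proof -
    have "(\<Prod>s\<in>insert u (insert v W). k s ((x(v := z, u := y)) s) (restrict (x(v := z, u := y)) (Pa s)))
      = k u y (restrict x (Pa u)) * R (x(v := z))"
      unfolding R_def by (rule prod_kernels_two_point_update[where Pa = Pa, OF W Pa])
    then show ?thesis
      by (simp only: ac_simps)
  qed
  then have "(\<integral>\<^sup>+ z. (\<integral>\<^sup>+ y. indicator Y y * indicator Z z
        * (\<Prod>s\<in>insert u (insert v W). k s ((x(v := z, u := y)) s) (restrict (x(v := z, u := y)) (Pa s))) \<partial>M u) \<partial>M v)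
      = (\<integral>\<^sup>+ z. (indicator Z z * R (x(v := z))) * (\<integral>\<^sup>+ y. indicator Y y * k u y (restrict x (Pa u)) \<partial>M u) \<partial>M v)"
    by (simp only: nn_integral_cmult[OF a_meas])
  also have "\<dots> = (\<integral>\<^sup>+ y. indicator Y y * k u y (restrict x (Pa u)) \<partial>M u) * (\<integral>\<^sup>+ z. indicator Z z * R (x(v := z)) \<partial>M v)"
    by (simp only: mult.commute[of "indicator Z _ * _"] nn_integral_cmult[OF c_meas])
  finally show ?thesis
    unfolding R_def .
qed

end

section \<open>The even mixture of two box laws\<close>

text \<open>When all sets \<open>C b s\<close> have measure one, this is the density of the law that puts every
  coordinate \<open>s\<close> into \<open>C False s\<close> or every coordinate into \<open>C True s\<close>, each with probability \<open>1/2\<close>.\<close>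

definition box_mixture :: "'i set \<Rightarrow> (bool \<Rightarrow> 'i \<Rightarrow> 'a set) \<Rightarrow> ('i \<Rightarrow> 'a) \<Rightarrow> ennreal" where
  "box_mixture S C x = ((\<Prod>s\<in>S. indicator (C False s) (x s)) + (\<Prod>s\<in>S. indicator (C True s) (x s))) / 2"

lemma borel_measurable_box_mixture:
  assumes "\<And>b s. s \<in> S \<Longrightarrow> C b s \<in> sets (M s)"
  shows "box_mixture S C \<in> borel_measurable (PiM S M)"
  unfolding box_mixture_def using assms by measurable

lemma box_mixture_two_point_section:
  assumes uv: "finite W" "u \<noteq> v" "u \<notin> W" "v \<notin> W"
    and x: "\<And>s. s \<in> W \<Longrightarrow> x s \<in> C False s" and W: "\<And>s. s \<in> W \<Longrightarrow> C True s = C False s"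
    and disj: "C False u \<inter> C True u = {}" "C False v \<inter> C True v = {}"
    and C: "\<And>b. C b u \<in> sets Mu" "\<And>b. C b v \<in> sets Mv"
      "\<And>b. emeasure Mu (C b u) = 1" "\<And>b. emeasure Mv (C b v) = 1"
  shows "(\<integral>\<^sup>+ z. (\<integral>\<^sup>+ y. indicator (C i u) y * indicator (C j v) z
           * box_mixture (insert u (insert v W)) C (x(v := z, u := y)) \<partial>Mu) \<partial>Mv)
       = (if i = j then 1/2 else 0)"
proof -
  have "(\<Prod>s\<in>W. indicator (C b s) ((x(v := z, u := y)) s)) = (1 :: ennreal)" for b y z
    using uv x W by (intro prod.neutral) (cases b; auto)
  then have "(\<Prod>s\<in>insert u (insert v W). indicator (C b s) ((x(v := z, u := y)) s))
      = (indicator (C b u) y * indicator (C b v) z :: ennreal)" for b y z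
    using uv by simp
  then have "indicator (C i u) y * indicator (C j v) z * box_mixture (insert u (insert v W)) C (x(v := z, u := y))
      = (if i = j then (1/2 * indicator (C i v) z) * indicator (C i u) y else 0)" for y z
    unfolding box_mixture_def using disj
    by (cases i; cases j) (auto simp: indicator_def ennreal_times_divide)
  then show ?thesis
    using C by (simp add: nn_integral_cmult_indicator nn_integral_multc)
qed

context product_sigma_finite
begin

lemma nn_integral_box_mixture_marginal:
  assumes S: "finite S" "A \<subseteq> S"
    and C: "\<And>b s. s \<in> S \<Longrightarrow> C b s \<in> sets (M s)" "\<And>b s. s \<in> S \<Longrightarrow> emeasure (M s) (C b s) = 1"
    and \<phi>: "\<phi> \<in> borel_measurable (PiM A M)"
  shows "(\<integral>\<^sup>+ x. \<phi> (restrict x A) * box_mixture S C x \<partial>PiM S M)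
       = (\<integral>\<^sup>+ x. \<phi> x * box_mixture A C x \<partial>PiM A M)"
proof -
  have box: "(\<integral>\<^sup>+ x. \<phi> (restrict x A) * (\<Prod>s\<in>S. indicator (C b s) (x s)) \<partial>PiM S M)
       = (\<integral>\<^sup>+ x. \<phi> x * (\<Prod>s\<in>A. indicator (C b s) (x s)) \<partial>PiM A M)" for b
    using nn_integral_PiM_factorized_marginal[where Pa = "\<lambda>_. {}" and K = "\<lambda>s y z. indicator (C b s) y"
        and ord = "\<lambda>_. 0"] assms
    by (simp add: measurable_compose[OF measurable_fst])
  have meas: "(\<lambda>x. \<phi> (restrict x A)) \<in> borel_measurable (PiM S M)"
    "(\<lambda>x. \<Prod>s\<in>S. indicator (C b s) (x s) :: ennreal) \<in> borel_measurable (PiM S M)"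
    "(\<lambda>x. \<Prod>s\<in>A. indicator (C b s) (x s) :: ennreal) \<in> borel_measurable (PiM A M)" for b
    using measurable_compose[OF measurable_restrict_subset[OF S(2)] \<phi>] C(1) S(2)
    by (auto intro!: borel_measurable_prod_ennreal)
  have split: "p * ((a + b) / 2) = p * a / 2 + p * b / 2" for p a b :: ennreal
    by (simp add: ennreal_times_divide distrib_left add_divide_distrib_ennreal)
  show ?thesis
    unfolding box_mixture_def split using meas \<phi> box by (simp add: nn_integral_add nn_integral_divide)
qed

lemma nn_integral_marginal_factorization_eq_box_mixture:
  fixes k :: "'i \<Rightarrow> 'a \<Rightarrow> ('i \<Rightarrow> 'a) \<Rightarrow> ennreal" and ord :: "'i \<Rightarrow> nat"
  assumes N: "finite N" "A \<subseteq> N"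
    and Pa: "\<And>s. s \<in> N \<Longrightarrow> Pa s \<subseteq> N" "\<And>s t. s \<in> N \<Longrightarrow> t \<in> Pa s \<Longrightarrow> ord t < ord s"
    and ancestral: "\<And>s. s \<in> A \<Longrightarrow> Pa s \<subseteq> A"
    and k_meas: "\<And>s. s \<in> N \<Longrightarrow> (\<lambda>(y, z). k s y z) \<in> borel_measurable (M s \<Otimes>\<^sub>M PiM (Pa s) M)"
    and k_norm: "\<And>s z. s \<in> N \<Longrightarrow> z \<in> space (PiM (Pa s) M) \<Longrightarrow> (\<integral>\<^sup>+ y. k s y z \<partial>M s) = 1"
    and C: "\<And>b s. s \<in> N \<Longrightarrow> C b s \<in> sets (M s)" "\<And>b s. s \<in> N \<Longrightarrow> emeasure (M s) (C b s) = 1"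
    and eq: "density (PiM N M) (\<lambda>x. \<Prod>s\<in>N. k s (x s) (restrict x (Pa s))) = density (PiM N M) (box_mixture N C)"
    and \<phi>: "\<phi> \<in> borel_measurable (PiM A M)"
  shows "(\<integral>\<^sup>+ x. \<phi> x * (\<Prod>s\<in>A. k s (x s) (restrict x (Pa s))) \<partial>PiM A M)
    = (\<integral>\<^sup>+ x. \<phi> x * box_mixture A C x \<partial>PiM A M)"
proof -
  have \<phi>_N: "(\<lambda>x. \<phi> (restrict x A)) \<in> borel_measurable (PiM N M)"
    using measurable_compose[OF measurable_restrict_subset[OF N(2)] \<phi>] by simp
  have "(\<integral>\<^sup>+ x. \<phi> x * (\<Prod>s\<in>A. k s (x s) (restrict x (Pa s))) \<partial>PiM A M)
      = (\<integral>\<^sup>+ x. \<phi> (restrict x A) * (\<Prod>s\<in>N. k s (x s) (restrict x (Pa s))) \<partial>PiM N M)"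
    using nn_integral_PiM_factorized_marginal[OF N Pa ancestral k_meas k_norm \<phi>] by simp
  also have "\<dots> = (\<integral>\<^sup>+ x. \<phi> (restrict x A) \<partial>density (PiM N M) (\<lambda>x. \<Prod>s\<in>N. k s (x s) (restrict x (Pa s))))"
    using Pa(1) k_meas \<phi>_N
    by (subst nn_integral_density) (auto intro!: borel_measurable_prod_ennreal borel_measurable_kernel_PiM simp: mult.commute)
  also have "\<dots> = (\<integral>\<^sup>+ x. \<phi> (restrict x A) * box_mixture N C x \<partial>PiM N M)"
    unfolding eq using C(1) \<phi>_N
    by (subst nn_integral_density) (auto intro!: borel_measurable_box_mixture simp: mult.commute)
  also have "\<dots> = (\<integral>\<^sup>+ x. \<phi> x * box_mixture A C x \<partial>PiM A M)"
    using nn_integral_box_mixture_marginal[OF N C \<phi>] .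
  finally show ?thesis .
qed

lemma density_factorization_ne_box_mixture:
  fixes k :: "'i \<Rightarrow> 'a \<Rightarrow> ('i \<Rightarrow> 'a) \<Rightarrow> ennreal" and ord :: "'i \<Rightarrow> nat"
  assumes N: "finite N" "u \<in> N" "v \<in> N" "ord v < ord u"
    and Pa: "\<And>s. s \<in> N \<Longrightarrow> Pa s \<subseteq> N" "\<And>s t. s \<in> N \<Longrightarrow> t \<in> Pa s \<Longrightarrow> ord t < ord s"
    and v_Pa: "v \<notin> Pa u"
    and k_meas: "\<And>s. s \<in> N \<Longrightarrow> (\<lambda>(y, z). k s y z) \<in> borel_measurable (M s \<Otimes>\<^sub>M PiM (Pa s) M)"
    and k_norm: "\<And>s z. s \<in> N \<Longrightarrow> z \<in> space (PiM (Pa s) M) \<Longrightarrow> (\<integral>\<^sup>+ y. k s y z \<partial>M s) = 1"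
    and C: "\<And>b s. s \<in> N \<Longrightarrow> C b s \<in> sets (M s)" "\<And>b s. s \<in> N \<Longrightarrow> emeasure (M s) (C b s) = 1"
    and disj: "C False u \<inter> C True u = {}" "C False v \<inter> C True v = {}"
    and C_eq: "\<And>s. s \<in> N \<Longrightarrow> ord s \<le> ord u \<Longrightarrow> s \<noteq> u \<Longrightarrow> s \<noteq> v \<Longrightarrow> C True s = C False s"
  shows "density (PiM N M) (\<lambda>x. \<Prod>s\<in>N. k s (x s) (restrict x (Pa s))) \<noteq> density (PiM N M) (box_mixture N C)"
proof
  assume eq: "density (PiM N M) (\<lambda>x. \<Prod>s\<in>N. k s (x s) (restrict x (Pa s))) = density (PiM N M) (box_mixture N C)"
  \<comment> \<open>\<open>u\<close> is the last node of the initial segment \<open>A\<close>, and \<open>v\<close> is none of its parents\<close>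
  define W where "W = {s \<in> N. ord s \<le> ord u} - {u, v}"
  note segment = initial_segment_split[where Pa = Pa, OF N Pa v_Pa, folded W_def]
  note W = segment(2-5) and Pa_A = segment(6) and Pa_u = segment(7)
  define A where "A = insert u (insert v W)"
  note A = A_def
  have ancestral: "Pa s \<subseteq> A" if "s \<in> A" for s
    using Pa_A that unfolding A by blast
  let ?g = "\<lambda>x. \<Prod>s\<in>A. k s (x s) (restrict x (Pa s))"
  let ?table = "\<lambda>F i j x. \<integral>\<^sup>+ z. (\<integral>\<^sup>+ y. indicator (C i u) y * indicator (C j v) z * F (x(v := z, u := y)) \<partial>M u) \<partial>M v"
  have "A \<subseteq> N"
    using A W(4) N(2,3) by auto
  note marginal_eq = nn_integral_marginal_factorization_eq_box_mixture[OF N(1) this Pa ancestral k_meas k_norm C eq]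
  have g_meas: "?g \<in> borel_measurable (PiM A M)"
    using \<open>A \<subseteq> N\<close> ancestral k_meas by (intro borel_measurable_prod_ennreal borel_measurable_kernel_PiM) auto
  have box_meas: "box_mixture A C \<in> borel_measurable (PiM A M)"
    using \<open>A \<subseteq> N\<close> C(1) by (intro borel_measurable_box_mixture) auto
  note box = PiE_unit_box[of W "C False", OF W(1) C[OF subsetD[OF W(4)]]]
  have "\<exists>x\<in>PiE W (C False). \<forall>i j. ?table ?g i j x = ?table (box_mixture A C) i j x"
    unfolding A
    by (rule ex_two_point_sections_eq[OF W(1-3) g_meas[unfolded A] box_meas[unfolded A] marginal_eq[unfolded A]
          C(1)[OF N(2)] C(1)[OF N(3)] box(1)]) (simp_all add: box(2))
  then obtain x where x: "x \<in> PiE W (C False)"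
    and table_eq: "\<forall>i j. ?table ?g i j x = ?table (box_mixture A C) i j x"
    by blast
  define a where "a i = (\<integral>\<^sup>+ y. indicator (C i u) y * k u y (restrict x (Pa u)) \<partial>M u)" for i
  define c where "c j = (\<integral>\<^sup>+ z. indicator (C j v) z
      * (\<Prod>s\<in>insert v W. k s ((x(v := z)) s) (restrict (x(v := z)) (Pa s))) \<partial>M v)" for j
  \<comment> \<open>under \<open>?g\<close> the table factorises as \<open>a i * c j\<close>; under the mixture it is diagonal\<close>
  have "?table ?g i j x = a i * c j" for i j
    unfolding A a_def c_def
    using Pa_A Pa_u k_meas A W(4) C(1) N(2,3) x box(3)
    by (intro nn_integral_factorized_two_point_section[OF W(1-3)]) auto
  moreover have "?table (box_mixture A C) i j x = (if i = j then 1/2 else 0)" for i j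
    unfolding A
  proof (rule box_mixture_two_point_section)
    show "C True s = C False s" if "s \<in> W" for s
      using C_eq[of s] that W segment(1) by auto
  qed (use x W disj C N(2,3) in \<open>auto simp: PiE_iff\<close>)
  ultimately have table: "a i * c j = (if i = j then 1/2 else 0)" for i j
    using table_eq by simp
  \<comment> \<open>a rank-one \<open>2 \<times> 2\<close> table cannot be diagonal with nonzero diagonal\<close>
  have "a False \<noteq> 0" "c True \<noteq> 0"
    using table[of False False] table[of True True] by auto
  with table[of False True] show False
    by simp
qed
end

section \<open>Copying a fair coin along a tree\<close>

lemma prod_indicator_eq_of_bool:
  "finite S \<Longrightarrow> (\<Prod>s\<in>S. indicator (A s) (x s)) = (of_bool (\<forall>s\<in>S. x s \<in> A s) :: 'b :: comm_semiring_1)"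
  by (induction S rule: finite_induct) (auto simp: indicator_def)

text \<open>The root \<open>\<rho>\<close> tosses a fair coin \<open>b\<close> and lands in \<open>C b \<rho>\<close>; every other node \<open>s\<close> reads the
  coin off its parent \<open>par s\<close> (as membership in \<open>C True (par s)\<close>) and lands in the matching \<open>C b s\<close>.\<close>

definition copy_kernel :: "'n \<Rightarrow> ('n \<Rightarrow> 'n) \<Rightarrow> (bool \<Rightarrow> 'n \<Rightarrow> 'a set) \<Rightarrow> 'n \<Rightarrow> 'a \<Rightarrow> ('n \<Rightarrow> 'a) \<Rightarrow> real" where
  "copy_kernel \<rho> par C s y z =
     (if s = \<rho> then (indicator (C False s) y + indicator (C True s) y) / 2
      else indicator (C (z (par s) \<in> C True (par s)) s) y)"

lemma copy_chain_iff:
  assumes "wf E" "E \<subseteq> N \<times> N" "x \<rho> \<in> C b \<rho>"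
    and par: "\<And>s. s \<in> N \<Longrightarrow> s \<noteq> \<rho> \<Longrightarrow> (par s, s) \<in> E" "\<And>s. s \<in> T \<Longrightarrow> s \<noteq> \<rho> \<Longrightarrow> par s \<in> T"
    and disj: "\<And>s. s \<in> T \<Longrightarrow> C False s \<inter> C True s = {}"
    and C_eq: "\<And>s. s \<notin> T \<Longrightarrow> C True s = C False s"
  shows "(\<forall>s\<in>N - {\<rho>}. x s \<in> C (x (par s) \<in> C True (par s)) s) \<longleftrightarrow> (\<forall>s\<in>N. x s \<in> C b s)"
proof -
  have bit: "(x t \<in> C True t) = b" if "t \<in> T" "x t \<in> C b t" for t
    using disj[OF that(1)] that(2) by (cases b) auto
  have C_const: "C c s = C c' s" if "s \<notin> T" for c c' s
    using C_eq[OF that] by (cases c; cases c') auto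
  have copy: "C (x (par s) \<in> C True (par s)) s = C b s"
    if "s \<noteq> \<rho>" "x (par s) \<in> C b (par s)" for s
    using that bit[of "par s"] par(2)[of s] C_const[of s] by (cases "s \<in> T") auto
  show ?thesis
  proof
    assume chain: "\<forall>s\<in>N - {\<rho>}. x s \<in> C (x (par s) \<in> C True (par s)) s"
    show "\<forall>s\<in>N. x s \<in> C b s"
    proof
      fix s assume "s \<in> N"
      then show "x s \<in> C b s"
      proof (induction s rule: wf_induct_rule[OF \<open>wf E\<close>])
        case (1 s)
        show ?case
        proof (cases "s = \<rho>")
          case False
          with 1 par(1) assms(2) have "x (par s) \<in> C b (par s)"
            by blast
          then show ?thesis
            using chain 1(2) False copy by auto
        qed (use assms(3) in simp)
      qed
    qed
  next
    assume "\<forall>s\<in>N. x s \<in> C b s"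
    then show "\<forall>s\<in>N - {\<rho>}. x s \<in> C (x (par s) \<in> C True (par s)) s"
      using copy par(1) assms(2) by blast
  qed
qed

lemma prod_copy_kernel:
  assumes "finite N" "wf E" "E \<subseteq> N \<times> N" "\<rho> \<in> N" "\<rho> \<in> T"
    and par: "\<And>s. s \<in> N \<Longrightarrow> s \<noteq> \<rho> \<Longrightarrow> (par s, s) \<in> E" "\<And>s. s \<in> T \<Longrightarrow> s \<noteq> \<rho> \<Longrightarrow> par s \<in> T"
    and disj: "\<And>s. s \<in> T \<Longrightarrow> C False s \<inter> C True s = {}"
    and C_eq: "\<And>s. s \<notin> T \<Longrightarrow> C True s = C False s"
  shows "(\<Prod>s\<in>N. copy_kernel \<rho> par C s (x s) x)
    = ((\<Prod>s\<in>N. indicator (C False s) (x s)) + (\<Prod>s\<in>N. indicator (C True s) (x s))) / 2"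
proof -
  let ?chain = "\<forall>s\<in>N - {\<rho>}. x s \<in> C (x (par s) \<in> C True (par s)) s"
  have "(\<Prod>s\<in>N. copy_kernel \<rho> par C s (x s) x)
      = copy_kernel \<rho> par C \<rho> (x \<rho>) x * (\<Prod>s\<in>N - {\<rho>}. indicator (C (x (par s) \<in> C True (par s)) s) (x s))"
    using assms(1,4) by (simp add: prod.remove copy_kernel_def)
  also have "\<dots> = (indicator (C False \<rho>) (x \<rho>) + indicator (C True \<rho>) (x \<rho>)) / 2 * of_bool ?chain"
    using assms(1) by (simp add: copy_kernel_def prod_indicator_eq_of_bool)
  finally have lhs: "(\<Prod>s\<in>N. copy_kernel \<rho> par C s (x s) x)
      = (indicator (C False \<rho>) (x \<rho>) + indicator (C True \<rho>) (x \<rho>)) / 2 * of_bool ?chain" .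
  have rhs: "(\<Prod>s\<in>N. indicator (C b s) (x s)) = (of_bool (\<forall>s\<in>N. x s \<in> C b s) :: real)" for b
    using assms(1) by (rule prod_indicator_eq_of_bool)
  show ?thesis
  proof (cases "x \<rho> \<in> C False \<rho> \<union> C True \<rho>")
    case True
    then obtain b where b: "x \<rho> \<in> C b \<rho>" "x \<rho> \<notin> C (\<not> b) \<rho>"
      using disj[OF assms(5)] by (metis (full_types) Int_iff Un_iff empty_iff)
    have "?chain \<longleftrightarrow> (\<forall>s\<in>N. x s \<in> C b s)"
      using copy_chain_iff[of E N x \<rho> C b par T] assms(2,3) b(1) par disj C_eq by blast
    moreover have "\<not> (\<forall>s\<in>N. x s \<in> C (\<not> b) s)"
      using b(2) assms(4) by blast
    ultimately show ?thesis
      unfolding lhs rhs using b by (cases b) (auto simp: indicator_def)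
  next
    case False
    then have "\<not> (\<forall>s\<in>N. x s \<in> C b s)" for b
      using assms(4) by (cases b) auto
    then show ?thesis
      unfolding lhs rhs using False by simp
  qed
qed

lemma borel_measurable_copy_kernel:
  assumes "\<And>b. C b s \<in> sets (M s)"
    and "s \<noteq> \<rho> \<Longrightarrow> par s \<in> P" "\<And>b. s \<noteq> \<rho> \<Longrightarrow> C b (par s) \<in> sets (M (par s))"
  shows "(\<lambda>(y, z). copy_kernel \<rho> par C s y z) \<in> borel_measurable (M s \<Otimes>\<^sub>M PiM P M)"
proof (cases "s = \<rho>")
  case True
  have "(\<lambda>(y, z). (indicator (C False s) y + indicator (C True s) y) / 2 :: real)
    \<in> borel_measurable (M s \<Otimes>\<^sub>M PiM P M)"
    using assms(1) by measurable
  then show ?thesis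
    unfolding copy_kernel_def using True by simp
next
  case False
  have "(\<lambda>x. snd x (par s)) \<in> measurable (M s \<Otimes>\<^sub>M PiM P M) (M (par s))"
    using assms(2) False by (intro measurable_compose[OF measurable_snd measurable_component_singleton])
  then have "Measurable.pred (M s \<Otimes>\<^sub>M PiM P M) (\<lambda>x. snd x (par s) \<in> C True (par s))"
    using assms(3) False by (intro pred_sets2)
  then have "(\<lambda>(y, z). if z (par s) \<in> C True (par s) then indicator (C True s) y else indicator (C False s) y :: real)
    \<in> borel_measurable (M s \<Otimes>\<^sub>M PiM P M)"
    using assms(1) by measurable
  moreover have "indicator (C (z (par s) \<in> C True (par s)) s) y
      = (if z (par s) \<in> C True (par s) then indicator (C True s) y else indicator (C False s) y :: real)" for y z
    by (cases "z (par s) \<in> C True (par s)") simp_all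
  ultimately show ?thesis
    unfolding copy_kernel_def using False by simp
qed

lemma nn_integral_copy_kernel:
  assumes "\<And>b. C b s \<in> sets (M s)" "\<And>b. emeasure (M s) (C b s) = 1"
  shows "(\<integral>\<^sup>+ y. ennreal (copy_kernel \<rho> par C s y z) \<partial>M s) = 1"
proof (cases "s = \<rho>")
  case True
  have "ennreal (copy_kernel \<rho> par C s y z) = (indicator (C False s) y + indicator (C True s) y) / 2" for y
    unfolding copy_kernel_def using True
    by (simp add: ennreal_plus divide_ennreal[symmetric] ennreal_indicator)
  then show ?thesis
    using assms by (simp add: nn_integral_divide nn_integral_add)
next
  case False
  then show ?thesis
    unfolding copy_kernel_def using assms by (simp add: ennreal_indicator)
qed

lemma pa_subset: "E \<subseteq> N \<times> N \<Longrightarrow> pa E s \<subseteq> N"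
  unfolding pa_def by auto

lemma is_DAG_wf: "is_DAG N E \<Longrightarrow> wf E"
  unfolding is_DAG_def by (metis finite_SigmaI finite_acyclic_wf finite_subset)

lemma ennreal_prod_copy_kernel:
  assumes DAG: "is_DAG N E" and \<rho>: "\<rho> \<in> N" "\<rho> \<in> T"
    and par: "\<And>s. s \<in> N \<Longrightarrow> s \<noteq> \<rho> \<Longrightarrow> par s \<in> pa E s" "\<And>s. s \<in> T \<Longrightarrow> s \<noteq> \<rho> \<Longrightarrow> par s \<in> T"
    and disj: "\<And>s. s \<in> T \<Longrightarrow> C False s \<inter> C True s = {}"
    and C_eq: "\<And>s. s \<notin> T \<Longrightarrow> C True s = C False s"
  shows "ennreal (\<Prod>s\<in>N. copy_kernel \<rho> par C s (x s) (restrict x (pa E s))) = box_mixture N C x"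
proof -
  have N: "finite N" "E \<subseteq> N \<times> N" "wf E"
    using DAG is_DAG_wf[OF DAG] unfolding is_DAG_def by auto
  have "copy_kernel \<rho> par C s (x s) (restrict x (pa E s)) = copy_kernel \<rho> par C s (x s) x" if "s \<in> N" for s
    using par(1)[OF that] by (simp add: copy_kernel_def)
  moreover have "(\<Prod>s\<in>N. copy_kernel \<rho> par C s (x s) x)
    = ((\<Prod>s\<in>N. indicator (C False s) (x s)) + (\<Prod>s\<in>N. indicator (C True s) (x s))) / 2"
    using N \<rho> par disj C_eq by (intro prod_copy_kernel[of N E \<rho> T par C x]) (auto simp: pa_def)
  ultimately have "(\<Prod>s\<in>N. copy_kernel \<rho> par C s (x s) (restrict x (pa E s)))
    = ((\<Prod>s\<in>N. indicator (C False s) (x s)) + (\<Prod>s\<in>N. indicator (C True s) (x s))) / 2"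
    by simp
  also have "ennreal \<dots> = box_mixture N C x"
    unfolding box_mixture_def
    by (simp add: ennreal_plus divide_ennreal[symmetric] prod_nonneg prod_ennreal[symmetric] ennreal_indicator)
  finally show ?thesis .
qed

lemma (in product_sigma_finite) box_mixture_in_Pfam:
  assumes DAG: "is_DAG N E" and \<rho>: "\<rho> \<in> N" "\<rho> \<in> T"
    and par: "\<And>s. s \<in> N \<Longrightarrow> s \<noteq> \<rho> \<Longrightarrow> par s \<in> pa E s" "\<And>s. s \<in> T \<Longrightarrow> s \<noteq> \<rho> \<Longrightarrow> par s \<in> T"
    and C: "\<And>b s. s \<in> N \<Longrightarrow> C b s \<in> sets (M s)" "\<And>b s. s \<in> N \<Longrightarrow> emeasure (M s) (C b s) = 1"
    and disj: "\<And>s. s \<in> T \<Longrightarrow> C False s \<inter> C True s = {}"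
    and C_eq: "\<And>s. s \<notin> T \<Longrightarrow> C True s = C False s"
  shows "density (PiM N M) (box_mixture N C) \<in> Pfam N E M"
proof -
  have N: "finite N" "E \<subseteq> N \<times> N"
    using DAG unfolding is_DAG_def by auto
  have "prob_space (density (PiM N M) (box_mixture N C))"
  proof (rule prob_spaceI)
    have "(\<integral>\<^sup>+ x. box_mixture N C x \<partial>PiM N M) = (\<integral>\<^sup>+ x. box_mixture {} C x \<partial>PiM {} M)"
      using nn_integral_box_mixture_marginal[OF N(1) empty_subsetI C, of "\<lambda>_. 1"] by simp
    also have "\<dots> = 1"
      by (simp add: box_mixture_def space_PiM_empty)
    finally show "emeasure (density (PiM N M) (box_mixture N C)) (space (density (PiM N M) (box_mixture N C))) = 1"
      using C(1) by (simp add: emeasure_density borel_measurable_box_mixture)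
  qed
  moreover have "(\<lambda>(y, z). copy_kernel \<rho> par C s y z) \<in> borel_measurable (M s \<Otimes>\<^sub>M PiM (pa E s) M)"
    if "s \<in> N" for s
    using that C(1) par(1) pa_subset[OF N(2)] by (intro borel_measurable_copy_kernel) blast+
  moreover have "(\<integral>\<^sup>+ y. ennreal (copy_kernel \<rho> par C s y z) \<partial>M s) = 1" if "s \<in> N" for s z
    using that C by (intro nn_integral_copy_kernel)
  moreover have "0 \<le> copy_kernel \<rho> par C s y z" for s y z
    by (simp add: copy_kernel_def)
  ultimately show ?thesis
    unfolding Pfam_def using ennreal_prod_copy_kernel[where C = C, OF DAG \<rho> par disj C_eq]
    by (intro CollectI conjI exI[of _ "copy_kernel \<rho> par C"]) auto
qed

section \<open>Graphs and state spaces\<close>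

lemma topo_order_pa_less: "topo_order N E O' \<Longrightarrow> t \<in> pa E s \<Longrightarrow> O' t < O' s"
  unfolding topo_order_def pa_def by auto

lemma unique_root_rtrancl:
  assumes "is_DAG N E" "roots N E = {\<rho>}" "s \<in> N"
  shows "(\<rho>, s) \<in> E\<^sup>*"
  using assms(3)
proof (induction s rule: wf_induct_rule[OF is_DAG_wf[OF assms(1)]])
  case (1 s)
  show ?case
  proof (cases "s = \<rho>")
    case False
    then obtain t where t: "(t, s) \<in> E"
      using assms(2) 1(2) unfolding roots_def pa_def by auto
    moreover have "t \<in> N"
      using t assms(1) unfolding is_DAG_def by auto
    ultimately show ?thesis
      using 1(1) by (meson rtrancl.rtrancl_into_rtrancl)
  qed simp
qed

lemma topo_order_converse_trancl:
  assumes "topo_order N E' O'" "E\<inverse> \<subseteq> E'" "(s, t) \<in> E\<^sup>+"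
  shows "O' t < O' s"
  using assms(3)
proof induction
  case (base t)
  then show ?case using assms(1,2) unfolding topo_order_def by auto
next
  case (step t t')
  then have "O' t' < O' t" using assms(1,2) unfolding topo_order_def by auto
  with step.IH show ?case by simp
qed

lemma obtain_copy_tree:
  assumes DAG: "is_DAG N E" and root: "roots N E = {\<rho>}"
    and ord: "topo_order N E' O'" "E\<inverse> \<subseteq> E'"
    and N: "r \<in> N" "u \<in> N" "v \<in> N" and "O' u < O' r" "(r, v) \<in> E"
  obtains T par where "T \<subseteq> N" "\<rho> \<in> T" "u \<in> T" "v \<in> T"
    "\<And>s. s \<in> N \<Longrightarrow> s \<noteq> \<rho> \<Longrightarrow> par s \<in> pa E s" "\<And>s. s \<in> T \<Longrightarrow> s \<noteq> \<rho> \<Longrightarrow> par s \<in> T"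
    "\<And>s. s \<in> T \<Longrightarrow> O' s \<le> O' u \<Longrightarrow> s = u \<or> s = v"
proof -
  define T where "T = {s \<in> N. (s, u) \<in> E\<^sup>* \<or> (s, r) \<in> E\<^sup>*} \<union> {v}"
  have E: "E \<subseteq> N \<times> N"
    using DAG unfolding is_DAG_def by simp
  have parent: "\<exists>t. (t, s) \<in> E \<and> (s \<in> T \<longrightarrow> t \<in> T)" if s: "s \<in> N" "s \<noteq> \<rho>" for s
  proof (cases "s = v")
    case True
    then show ?thesis using N \<open>(r, v) \<in> E\<close> unfolding T_def by auto
  next
    case False
    obtain t where t: "(t, s) \<in> E"
      using root s unfolding roots_def pa_def by auto
    then have "s \<in> T \<longrightarrow> t \<in> T"
      using False E unfolding T_def by (auto intro: converse_rtrancl_into_rtrancl)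
    with t show ?thesis by blast
  qed
  define par where "par s = (SOME t. (t, s) \<in> E \<and> (s \<in> T \<longrightarrow> t \<in> T))" for s
  have par: "(par s, s) \<in> E \<and> (s \<in> T \<longrightarrow> par s \<in> T)" if "s \<in> N" "s \<noteq> \<rho>" for s
    unfolding par_def using someI_ex[OF parent[OF that]] .
  have low: "s = u \<or> s = v" if "s \<in> T" "O' s \<le> O' u" for s
  proof (rule ccontr)
    assume "\<not> (s = u \<or> s = v)"
    then have "(s, u) \<in> E\<^sup>+ \<or> (s, r) \<in> E\<^sup>+ \<or> s = r"
      using that(1) unfolding T_def by (auto simp: rtrancl_eq_or_trancl)
    then show False
      using topo_order_converse_trancl[OF ord] that(2) \<open>O' u < O' r\<close> by fastforce
  qed
  have "T \<subseteq> N"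
    using N unfolding T_def by auto
  show ?thesis
  proof (rule that[of T par])
    show "u \<in> T" "v \<in> T"
      unfolding T_def using N by auto
    show "\<rho> \<in> T"
      using unique_root_rtrancl[OF DAG root N(2)] root N(2) unfolding T_def roots_def by auto
  qed (use par low \<open>T \<subseteq> N\<close> in \<open>auto simp: subset_eq pa_def\<close>)
qed

lemma Pfam_cong:
  assumes "E \<subseteq> N \<times> N" "\<And>s. s \<in> N \<Longrightarrow> M s = M' s"
  shows "Pfam N E M = Pfam N E M'"
proof -
  have "PiM S M = PiM S M'" if "S \<subseteq> N" for S
    using that assms(2) by (intro PiM_cong) auto
  then show ?thesis
    unfolding Pfam_def using assms(2) pa_subset[OF assms(1)] by simp
qed

lemma PfamE:
  assumes "P \<in> Pfam N E M"
  obtains k :: "'n \<Rightarrow> 'a \<Rightarrow> ('n \<Rightarrow> 'a) \<Rightarrow> ennreal" where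
    "\<And>s. s \<in> N \<Longrightarrow> (\<lambda>(y, z). k s y z) \<in> borel_measurable (M s \<Otimes>\<^sub>M PiM (pa E s) M)"
    "\<And>s z. s \<in> N \<Longrightarrow> z \<in> space (PiM (pa E s) M) \<Longrightarrow> (\<integral>\<^sup>+ y. k s y z \<partial>M s) = 1"
    "P = density (PiM N M) (\<lambda>x. \<Prod>s\<in>N. k s (x s) (restrict x (pa E s)))"
proof -
  from assms obtain k :: "'n \<Rightarrow> 'a \<Rightarrow> ('n \<Rightarrow> 'a) \<Rightarrow> real" where
    k: "\<And>s. s \<in> N \<Longrightarrow> (\<lambda>(y, z). k s y z) \<in> borel_measurable (M s \<Otimes>\<^sub>M PiM (pa E s) M)"
      "\<And>s y z. s \<in> N \<Longrightarrow> 0 \<le> k s y z"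
      "\<And>s z. s \<in> N \<Longrightarrow> z \<in> space (PiM (pa E s) M) \<Longrightarrow> (\<integral>\<^sup>+ y. ennreal (k s y z) \<partial>M s) = 1"
      and P: "P = density (PiM N M) (\<lambda>x. ennreal (\<Prod>s\<in>N. k s (x s) (restrict x (pa E s))))"
    unfolding Pfam_def by blast
  show ?thesis
  proof
    show "(\<lambda>(y, z). ennreal (k s y z)) \<in> borel_measurable (M s \<Otimes>\<^sub>M PiM (pa E s) M)" if "s \<in> N" for s
      using measurable_compose[OF k(1)[OF that] measurable_ennreal] by (simp add: case_prod_beta')
    show "P = density (PiM N M) (\<lambda>x. \<Prod>s\<in>N. ennreal (k s (x s) (restrict x (pa E s))))"
      unfolding P using k(2) by (simp add: prod_ennreal)
  qed (use k(3) in auto)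
qed

lemma valid_state_spaces_sigma_finite:
  assumes "valid_state_spaces N M" "s \<in> N"
  shows "sigma_finite_measure (M s)"
proof -
  interpret L: product_sigma_finite "\<lambda>_::nat. lborel :: real measure"
    by unfold_locales
  from assms consider A where "finite A" "M s = count_space A" | d where "M s = (\<Pi>\<^sub>M i\<in>{..<d}. lborel)"
    unfolding valid_state_spaces_def by blast
  then show ?thesis
    by cases (simp_all add: sigma_finite_measure_count_space_finite L.sigma_finite)
qed

lemma valid_state_spaces_disjoint_unit_sets:
  assumes "valid_state_spaces N M" "s \<in> N"
  shows "\<exists>B. (\<forall>b. B b \<in> sets (M s) \<and> emeasure (M s) (B b) = 1) \<and> B False \<inter> B True = {}"
  using assms(2,1) unfolding valid_state_spaces_def
proof (elim ballE disjE exE conjE)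
  fix A assume A: "finite A" "2 \<le> card A" "M s = count_space A"
  then obtain a a' where "a \<in> A" "a' \<in> A" "a \<noteq> a'"
    using card_le_Suc0_iff_eq[OF A(1)] by auto
  then show ?thesis
    using A by (intro exI[of _ "\<lambda>b. if b then {a} else {a'}"]) auto
next
  fix d :: nat assume d: "1 \<le> d" "M s = (\<Pi>\<^sub>M i\<in>{..<d}. lborel)"
  interpret L: product_sigma_finite "\<lambda>_::nat. lborel :: real measure"
    by unfold_locales
  define B where "B b = PiE {..<d} (\<lambda>i. if i = 0 \<and> b then {2..3} else {0..1::real})" for b
  have "B b \<in> sets (M s)" for b
    unfolding B_def d(2) by (intro sets_PiM_I_finite) auto
  moreover have "emeasure (M s) (B b) = 1" for b
    unfolding B_def d(2) by (subst L.emeasure_PiM) (auto intro!: prod.neutral)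
  moreover have "B False \<inter> B True = {}"
  proof (intro equals0I)
    fix x assume x: "x \<in> B False \<inter> B True"
    have "0 \<in> {..<d}"
      using d(1) by simp
    have "x 0 \<in> (if b then {2..3} else {0..1::real})" for b
    proof -
      have "x \<in> B b"
        using x by (cases b) auto
      from PiE_mem[OF this[unfolded B_def] \<open>0 \<in> {..<d}\<close>] show ?thesis
        by simp
    qed
    from this[of False] this[of True] show False by simp
  qed
  ultimately show ?thesis
    by blast
qed auto

lemma valid_state_spaces_product_sigma_finite:
  assumes "valid_state_spaces N M"
  obtains M' where "product_sigma_finite M'" "\<And>s. s \<in> N \<Longrightarrow> M' s = M s" "valid_state_spaces N M'"
proof
  let ?M' = "\<lambda>s. if s \<in> N then M s else count_space {}"
  show "product_sigma_finite ?M'"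
    unfolding product_sigma_finite_def
    using valid_state_spaces_sigma_finite[OF assms] by (simp add: sigma_finite_measure_count_space_finite)
  show "valid_state_spaces N ?M'"
    using assms unfolding valid_state_spaces_def by simp
qed simp

lemma valid_state_spaces_coupled_sets:
  assumes "valid_state_spaces N M" "T \<subseteq> N"
  obtains C :: "bool \<Rightarrow> 'n \<Rightarrow> (nat \<Rightarrow> real) set" where
    "\<And>b s. s \<in> N \<Longrightarrow> C b s \<in> sets (M s)" "\<And>b s. s \<in> N \<Longrightarrow> emeasure (M s) (C b s) = 1"
    "\<And>s. s \<in> T \<Longrightarrow> C False s \<inter> C True s = {}" "\<And>s. s \<notin> T \<Longrightarrow> C True s = C False s"
proof -
  have "\<forall>s\<in>N. \<exists>B. (\<forall>b. B b \<in> sets (M s) \<and> emeasure (M s) (B b) = 1) \<and> B False \<inter> B True = {}"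
    using valid_state_spaces_disjoint_unit_sets[OF assms(1)] by blast
  from bchoice[OF this] obtain B where B: "\<forall>s\<in>N. (\<forall>b. B s b \<in> sets (M s) \<and> emeasure (M s) (B s b) = 1) \<and> B s False \<inter> B s True = {}"
    by (elim exE)
  show ?thesis
    by (rule that[of "\<lambda>b s. B s (b \<and> s \<in> T)"]) (use B assms(2) in auto)
qed

theorem lemma4:
  fixes N :: "'n set" and E E' :: "('n \<times> 'n) set"
    and M :: "'n \<Rightarrow> (nat \<Rightarrow> real) measure" and O' :: "'n \<Rightarrow> nat"
    and r u v :: 'n
  assumes "is_DAG N E" and "is_DAG N E'"
    and "valid_state_spaces N M"
    and "Pfam N E M \<subseteq> Pfam N E' M"
    and "E\<inverse> \<subseteq> E'"
    and "card (roots N E) = 1"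
    and "topo_order N E' O'"
    and "r \<in> N" and "u \<in> N" and "v \<in> N"
    and "O' v < O' u" and "O' u < O' r"
    and "(r, v) \<in> E"
  shows "(v, u) \<in> E'"
proof (rule ccontr)
  assume vu: "(v, u) \<notin> E'"
  obtain \<rho> where root: "roots N E = {\<rho>}"
    using assms(6) card_1_singletonE by blast
  obtain T par where T: "T \<subseteq> N" "\<rho> \<in> T" "u \<in> T" "v \<in> T"
    and par: "\<And>s. s \<in> N \<Longrightarrow> s \<noteq> \<rho> \<Longrightarrow> par s \<in> pa E s" "\<And>s. s \<in> T \<Longrightarrow> s \<noteq> \<rho> \<Longrightarrow> par s \<in> T"
    and T_low: "\<And>s. s \<in> T \<Longrightarrow> O' s \<le> O' u \<Longrightarrow> s = u \<or> s = v"
    using obtain_copy_tree[OF assms(1) root assms(7,5,8,9,10,12,13)] by blast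
  obtain M' where "product_sigma_finite M'" and M': "\<And>s. s \<in> N \<Longrightarrow> M' s = M s" "valid_state_spaces N M'"
    using valid_state_spaces_product_sigma_finite[OF assms(3)] by blast
  then interpret product_sigma_finite M'
    by simp
  obtain C where C: "\<And>b s. s \<in> N \<Longrightarrow> C b s \<in> sets (M' s)" "\<And>b s. s \<in> N \<Longrightarrow> emeasure (M' s) (C b s) = 1"
    and C_T: "\<And>s. s \<in> T \<Longrightarrow> C False s \<inter> C True s = {}" "\<And>s. s \<notin> T \<Longrightarrow> C True s = C False s"
    using valid_state_spaces_coupled_sets[OF M'(2) T(1)] by blast
  have E: "finite N" "E \<subseteq> N \<times> N" "E' \<subseteq> N \<times> N"
    using assms(1,2) unfolding is_DAG_def by auto
  have "density (PiM N M') (box_mixture N C) \<in> Pfam N E M'"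
    using T(1,2) by (intro box_mixture_in_Pfam[where par = par, OF assms(1) _ T(2) par C C_T]) auto
  then have "density (PiM N M') (box_mixture N C) \<in> Pfam N E' M'"
    using assms(4) Pfam_cong[OF E(2) M'(1)] Pfam_cong[OF E(3) M'(1)] by auto
  then obtain k where k: "\<And>s. s \<in> N \<Longrightarrow> (\<lambda>(y, z). k s y z) \<in> borel_measurable (M' s \<Otimes>\<^sub>M PiM (pa E' s) M')"
    "\<And>s z. s \<in> N \<Longrightarrow> z \<in> space (PiM (pa E' s) M') \<Longrightarrow> (\<integral>\<^sup>+ y. k s y z \<partial>M' s) = 1"
    "density (PiM N M') (box_mixture N C) = density (PiM N M') (\<lambda>x. \<Prod>s\<in>N. k s (x s) (restrict x (pa E' s)))"
    by (rule PfamE) blast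
  have "C True s = C False s" if "s \<in> N" "O' s \<le> O' u" "s \<noteq> u" "s \<noteq> v" for s
    using C_T(2) T_low that by blast
  then have "density (PiM N M') (\<lambda>x. \<Prod>s\<in>N. k s (x s) (restrict x (pa E' s))) \<noteq> density (PiM N M') (box_mixture N C)"
    using pa_subset[OF E(3)] topo_order_pa_less[OF assms(7)] vu C C_T(1)[OF T(3)] C_T(1)[OF T(4)]
    by (intro density_factorization_ne_box_mixture[where Pa = "pa E'" and k = k and ord = O',
          OF E(1) assms(9,10,11) _ _ _ k(1,2)]) (auto simp: pa_def)
  with k(3) show False
    by simp
qed

end
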